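(* Let $u,v>0$ and consider the map $(x,y)\mapsto\big(uy(1-y),\ vx(1-x)\big)$ (Kopel's map with $a=b=1$). Define $R_1=u^2v^2-4u^2v-4uv^2+18uv-27$, $S_3=u^3v^3-4u^3v^2-4u^2v^3+15u^2v^2+12u^2v+12uv^2-85uv+125$, $A_1=uv-15$, $A_2=u^2v^2-4u^2v-5uv^2+21uv+11v-60$. If $R_1>0$, $S_3>0$, $A_1<0$ and $A_2>0$, then two locally stable positive equilibria exist. Furthermore, exactly one locally stable positive equilibrium exists if either ($uv>1$, $R_1<0$, $S_3>0$) or ($uv>1$, $R_1>0$, $S_3<0$).
   Context: An equilibrium is a real fixed point $(x^*,y^* )$; it is positive if $x^*,y^*>0$. An equilibrium is called (locally) stable if both eigenvalues of the Jacobian matrix of the map at it have modulus less than $1$; for a general Kopel map $(x,y)\mapsto((1-a)x+auy(1-y),(1-b)y+bvx(1-x))$ the Jacobian at $(x^*,y^* )$ is $\begin{pmatrix}1-a & ua(1-2y^* )\\ vb(1-2x^* ) & 1-b\end{pmatrix}$, and stability is equivalent to the Jury conditions $1-\mathrm{Tr}(J)+\mathrm{Det}(J)>0$, $1+\mathrm{Tr}(J)+\mathrm{Det}(J)>0$, $1-\mathrm{Det}(J)>0$. *)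

theory Defs
  imports Complex_Main
begin

definition kopel :: "real \<Rightarrow> real \<Rightarrow> real \<Rightarrow> real \<Rightarrow> real \<times> real \<Rightarrow> real \<times> real" where
  "kopel a b u v p = (case p of (x, y) \<Rightarrow>
      ((1 - a) * x + a * u * y * (1 - y), (1 - b) * y + b * v * x * (1 - x)))"

definition kopel_equilibrium :: "real \<Rightarrow> real \<Rightarrow> real \<Rightarrow> real \<Rightarrow> real \<times> real \<Rightarrow> bool" where
  "kopel_equilibrium a b u v p \<longleftrightarrow> kopel a b u v p = p"

definition positive_point :: "real \<times> real \<Rightarrow> bool" where
  "positive_point p \<longleftrightarrow> fst p > 0 \<and> snd p > 0"

definition kopel_jacobian :: "real \<Rightarrow> real \<Rightarrow> real \<Rightarrow> real \<Rightarrow> real \<times> real \<Rightarrow> nat \<Rightarrow> nat \<Rightarrow> real" where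
  "kopel_jacobian a b u v p i j = (case p of (x, y) \<Rightarrow>
     (if i = 0 \<and> j = 0 then 1 - a
      else if i = 0 \<and> j = 1 then u * a * (1 - 2 * y)
      else if i = 1 \<and> j = 0 then v * b * (1 - 2 * x)
      else 1 - b))"

definition eigenvalue2 :: "(nat \<Rightarrow> nat \<Rightarrow> real) \<Rightarrow> complex \<Rightarrow> bool" where
  "eigenvalue2 M l \<longleftrightarrow>
     (l - complex_of_real (M 0 0)) * (l - complex_of_real (M 1 1))
       - complex_of_real (M 0 1) * complex_of_real (M 1 0) = 0"

definition kopel_stable :: "real \<Rightarrow> real \<Rightarrow> real \<Rightarrow> real \<Rightarrow> real \<times> real \<Rightarrow> bool" where
  "kopel_stable a b u v p \<longleftrightarrow>
     (\<forall>l. eigenvalue2 (kopel_jacobian a b u v p) l \<longrightarrow> cmod l < 1)"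

definition stable_pos_eq :: "real \<Rightarrow> real \<Rightarrow> real \<Rightarrow> real \<Rightarrow> real \<times> real \<Rightarrow> bool" where
  "stable_pos_eq a b u v p \<longleftrightarrow>
     kopel_equilibrium a b u v p \<and> positive_point p \<and> kopel_stable a b u v p"

end

theory Submission
  imports Defs "HOL-Library.Quadratic_Discriminant"
begin

text \<open>Write \<open>g\<close> for \<open>eq_cubic u v\<close> and \<open>h\<close> for \<open>jury_margin u v\<close>. The positive equilibria
  are the points \<open>(x, v x (1 - x))\<close> with \<open>x\<close> a root of \<open>g\<close> in \<open>(0, 1)\<close>, and for \<open>u v > 1\<close>
  every real root of \<open>g\<close> lies there. The Jacobian at such a point has zero diagonal, so its
  eigenvalues satisfy \<open>\<lambda>\<^sup>2 = 1 + x g'(x)\<close>, and the equilibrium is stable iff \<open>g'(x) < 0\<close>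
  and \<open>h(x) = 2 + x g'(x) > 0\<close>.

  \<open>R1\<close> is the discriminant of \<open>g\<close> up to a positive factor, and \<open>S3\<close> is the product of \<open>h\<close>
  over the three complex roots of \<open>g\<close>. If \<open>R1 < 0\<close>, \<open>g\<close> has one real root, \<open>g'\<close> is negative
  there, and the product of \<open>h\<close> over the conjugate pair is positive, so \<open>h\<close> at the real root
  has the sign of \<open>S3\<close>. If \<open>R1 > 0\<close>, the roots \<open>a < b < c\<close> have \<open>g'\<close> negative, positive,
  negative; since \<open>h(b) > 0\<close>, \<open>S3 < 0\<close> makes exactly one of \<open>h(a), h(c)\<close> positive. Finally,
  the values of \<open>h\<close> at the roots solve \<open>h\<^sup>3 + (u v - 15) h\<^sup>2 - T h - S3 = 0\<close>, which has
  no root \<open>h \<le> 0\<close> when \<open>A1 < 0\<close>, \<open>T < 0\<close> and \<open>S3 > 0\<close>; and \<open>T < 0\<close> follows from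
  \<open>A1 < 0\<close>, \<open>A2 > 0\<close>, \<open>S3 > 0\<close> by a fine estimate near \<open>u = v = sqrt 12\<close>.\<close>

definition eq_cubic :: "real \<Rightarrow> real \<Rightarrow> real \<Rightarrow> real" where
  "eq_cubic u v x = -u*v^2*x^3 + 2*u*v^2*x^2 - u*v*(v+1)*x + (u*v - 1)"

definition eq_cubic_deriv :: "real \<Rightarrow> real \<Rightarrow> real \<Rightarrow> real" where
  "eq_cubic_deriv u v x = -3*u*v^2*x^2 + 4*u*v^2*x - u*v*(v+1)"

(* At a root x of eq_cubic this is 1 - Det J at the equilibrium (x, v x (1 - x)). *)
definition jury_margin :: "real \<Rightarrow> real \<Rightarrow> real \<Rightarrow> real" where
  "jury_margin u v x = 2 + x * eq_cubic_deriv u v x"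

definition stable_root :: "real \<Rightarrow> real \<Rightarrow> real \<Rightarrow> bool" where
  "stable_root u v x \<longleftrightarrow>
     0 < x \<and> x < 1 \<and> eq_cubic u v x = 0 \<and> eq_cubic_deriv u v x < 0 \<and> jury_margin u v x > 0"

section \<open>Equilibria and their stability\<close>

lemma antidiagonal_eigenvalues_lt1_iff:
  assumes "M 0 0 = 0" and "M 1 1 = 0"
  shows "(\<forall>l. eigenvalue2 M l \<longrightarrow> cmod l < 1) \<longleftrightarrow> \<bar>M 0 1 * M 1 0\<bar> < 1"
proof -
  define c where "c = M 0 1 * M 1 0"
  have eig: "eigenvalue2 M l \<longleftrightarrow> l\<^sup>2 = complex_of_real c" for l
    using assms by (simp add: eigenvalue2_def c_def power2_eq_square)
  have norm_eig: "cmod l ^ 2 = \<bar>c\<bar>" if "eigenvalue2 M l" for l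
    using that by (simp add: eig flip: norm_power)
  show ?thesis
    unfolding c_def[symmetric]
  proof
    assume "\<forall>l. eigenvalue2 M l \<longrightarrow> cmod l < 1"
    moreover have "eigenvalue2 M (csqrt c)"
      by (simp add: eig)
    ultimately have "sqrt \<bar>c\<bar> < 1"
      by fastforce
    then show "\<bar>c\<bar> < 1"
      by simp
  next
    assume "\<bar>c\<bar> < 1"
    then show "\<forall>l. eigenvalue2 M l \<longrightarrow> cmod l < 1"
      using norm_eig by (metis abs_norm_cancel abs_square_less_1)
  qed
qed

lemma kopel_11: "kopel 1 1 u v (x, y) = (u*y*(1-y), v*x*(1-x))"
  by (simp add: kopel_def)

lemma kopel_stable_11_iff:
  "kopel_stable 1 1 u v (x, y) \<longleftrightarrow> \<bar>u*(1 - 2*y) * (v*(1 - 2*x))\<bar> < 1"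
  using antidiagonal_eigenvalues_lt1_iff[of "kopel_jacobian 1 1 u v (x, y)"]
  by (simp add: kopel_stable_def kopel_jacobian_def)

lemma x_times_eq_cubic: "x * eq_cubic u v x = u * (v*x*(1-x)) * (1 - v*x*(1-x)) - x"
  unfolding eq_cubic_def by algebra

lemma jacobian_product_on_graph:
  "u*(1 - 2*(v*x*(1-x))) * (v*(1 - 2*x)) = jury_margin u v x - 1 + eq_cubic u v x"
  unfolding jury_margin_def eq_cubic_def eq_cubic_deriv_def by algebra

lemma pos_equilibrium_iff:
  assumes "v > 0"
  shows "kopel_equilibrium 1 1 u v P \<and> positive_point P \<longleftrightarrow>
         (\<exists>x. P = (x, v*x*(1-x)) \<and> 0 < x \<and> x < 1 \<and> eq_cubic u v x = 0)"
proof
  assume "kopel_equilibrium 1 1 u v P \<and> positive_point P"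
  then obtain x y where P: "P = (x, y)" and fix1: "u*y*(1-y) = x" and fix2: "v*x*(1-x) = y"
    and "x > 0" and "y > 0"
    by (cases P) (simp add: kopel_equilibrium_def positive_point_def kopel_11)
  have "0 < (v*x) * (1-x)" and "0 < v*x"
    using fix2 \<open>y > 0\<close> \<open>v > 0\<close> \<open>x > 0\<close> by simp_all
  then have "x < 1"
    by (simp add: zero_less_mult_iff)
  moreover have "eq_cubic u v x = 0"
    using x_times_eq_cubic[of x u v] fix1 fix2 \<open>x > 0\<close> by simp
  ultimately show "\<exists>x. P = (x, v*x*(1-x)) \<and> 0 < x \<and> x < 1 \<and> eq_cubic u v x = 0"
    using P fix2 \<open>x > 0\<close> by auto
next
  assume "\<exists>x. P = (x, v*x*(1-x)) \<and> 0 < x \<and> x < 1 \<and> eq_cubic u v x = 0"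
  then obtain x where P: "P = (x, v*x*(1-x))" and "0 < x" "x < 1" "eq_cubic u v x = 0"
    by blast
  then show "kopel_equilibrium 1 1 u v P \<and> positive_point P"
    using \<open>v > 0\<close> x_times_eq_cubic[of x u v]
    by (simp add: kopel_equilibrium_def positive_point_def kopel_11)
qed

lemma stable_at_root_iff:
  assumes "x > 0" and "eq_cubic u v x = 0"
  shows "kopel_stable 1 1 u v (x, v*x*(1-x)) \<longleftrightarrow>
         eq_cubic_deriv u v x < 0 \<and> jury_margin u v x > 0"
proof -
  have "kopel_stable 1 1 u v (x, v*x*(1-x)) \<longleftrightarrow>
        -2 < x * eq_cubic_deriv u v x \<and> x * eq_cubic_deriv u v x < 0"
    using jacobian_product_on_graph[of u v x] assms(2)
    by (auto simp: kopel_stable_11_iff jury_margin_def abs_less_iff)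
  also have "\<dots> \<longleftrightarrow> eq_cubic_deriv u v x < 0 \<and> jury_margin u v x > 0"
    using \<open>x > 0\<close> by (auto simp: jury_margin_def mult_less_0_iff)
  finally show ?thesis .
qed

lemma stable_pos_eq_iff:
  assumes "v > 0"
  shows "stable_pos_eq 1 1 u v P \<longleftrightarrow> (\<exists>x. P = (x, v*x*(1-x)) \<and> stable_root u v x)"
proof -
  have "stable_pos_eq 1 1 u v P \<longleftrightarrow> (\<exists>x. P = (x, v*x*(1-x)) \<and> 0 < x \<and> x < 1 \<and>
          eq_cubic u v x = 0 \<and> kopel_stable 1 1 u v (x, v*x*(1-x)))"
    using pos_equilibrium_iff[OF assms] unfolding stable_pos_eq_def by (metis (no_types, lifting))
  also have "\<dots> \<longleftrightarrow> (\<exists>x. P = (x, v*x*(1-x)) \<and> stable_root u v x)"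
    using stable_at_root_iff unfolding stable_root_def by auto
  finally show ?thesis .
qed

lemma ex1_stable_pos_eq_if_ex1_stable_root:
  assumes "v > 0" and "\<exists>!x. stable_root u v x"
  shows "\<exists>!P. stable_pos_eq 1 1 u v P"
proof -
  obtain x where x: "stable_root u v x" and unique: "\<And>y. stable_root u v y \<Longrightarrow> y = x"
    using assms(2) by blast
  show ?thesis
  proof (rule ex1I)
    show "stable_pos_eq 1 1 u v (x, v*x*(1-x))"
      using x stable_pos_eq_iff[OF assms(1)] by blast
  next
    fix P
    assume "stable_pos_eq 1 1 u v P"
    then show "P = (x, v*x*(1-x))"
      using unique stable_pos_eq_iff[OF assms(1)] by blast
  qed
qed

lemma two_stable_pos_eq_if_two_stable_roots:
  assumes "v > 0" and "stable_root u v a" and "stable_root u v c" and "a \<noteq> c"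
  shows "\<exists>p q. p \<noteq> q \<and> stable_pos_eq 1 1 u v p \<and> stable_pos_eq 1 1 u v q"
  using assms unfolding stable_pos_eq_iff[OF assms(1)] by blast

section \<open>Roots of the equilibrium cubic\<close>

definition R1_poly :: "real \<Rightarrow> real \<Rightarrow> real" where
  "R1_poly u v = u^2*v^2 - 4*u^2*v - 4*u*v^2 + 18*u*v - 27"

definition S3_poly :: "real \<Rightarrow> real \<Rightarrow> real" where
  "S3_poly u v = u^3*v^3 - 4*u^3*v^2 - 4*u^2*v^3 + 15*u^2*v^2 + 12*u^2*v + 12*u*v^2 - 85*u*v + 125"

lemma eq_cubic_root_in_unit_interval:
  assumes "u > 0" and "v > 0" and "u*v > 1" and "eq_cubic u v x = 0"
  shows "0 < x \<and> x < 1"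
proof -
  have g: "u*v * ((1-x) * (1 + v*(x*(x-1)))) = 1"
    using assms(4) unfolding eq_cubic_def by algebra
  have "\<not> x \<le> 0"
  proof
    assume "x \<le> 0"
    then have "1 \<le> 1 - x" and "1 \<le> 1 + v*(x*(x-1))"
      using \<open>v > 0\<close> by (simp_all add: mult_nonpos_nonpos)
    then have "1 \<le> (1-x) * (1 + v*(x*(x-1)))"
      using mult_mono[of 1 "1-x" 1 "1 + v*(x*(x-1))"] by simp
    then have "u*v \<le> u*v * ((1-x) * (1 + v*(x*(x-1))))"
      using \<open>u*v > 1\<close> mult_left_mono[of 1 _ "u*v"] by simp
    then show False
      using g \<open>u*v > 1\<close> by simp
  qed
  moreover have "\<not> x \<ge> 1"
  proof
    assume "x \<ge> 1"
    then have "(1-x) * (1 + v*(x*(x-1))) \<le> 0"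
      using \<open>v > 0\<close> by (simp add: mult_nonpos_nonneg add_nonneg_nonneg)
    then have "u*v * ((1-x) * (1 + v*(x*(x-1)))) \<le> 0"
      using \<open>u > 0\<close> \<open>v > 0\<close> by (simp add: mult_nonneg_nonpos)
    then show False
      using g by simp
  qed
  ultimately show ?thesis
    by simp
qed

lemma eq_cubic_has_root:
  assumes "u*v \<ge> 1"
  shows "\<exists>x. eq_cubic u v x = 0"
proof -
  have "continuous_on {0..1} (eq_cubic u v)"
    unfolding eq_cubic_def by (intro continuous_intros)
  moreover have "eq_cubic u v 1 \<le> 0" and "0 \<le> eq_cubic u v 0"
    using assms by (simp_all add: eq_cubic_def algebra_simps power2_eq_square)
  ultimately show ?thesis
    using IVT2'[of "eq_cubic u v" 1 0 0] by auto
qed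

lemma one_lt_uv_if_R1_poly_pos:
  assumes "u > 0" and "v > 0" and "R1_poly u v > 0"
  shows "u*v > 1"
proof (rule ccontr)
  assume "\<not> u*v > 1"
  then have "(u*v)^2 \<le> 1"
    using assms(1,2) by (intro power_le_one) simp_all
  moreover have "R1_poly u v = (u*v)^2 + 18*(u*v) - 27 - 4*(u*v) * (u+v)"
    unfolding R1_poly_def by algebra
  moreover have "4*(u*v) * (u+v) > 0"
    using assms(1,2) by simp
  ultimately show False
    using assms(3) \<open>\<not> u*v > 1\<close> by linarith
qed

definition eq_quot_lin :: "real \<Rightarrow> real \<Rightarrow> real \<Rightarrow> real" where
  "eq_quot_lin u v x0 = u*v^2*(2 - x0)"

definition eq_quot_const :: "real \<Rightarrow> real \<Rightarrow> real \<Rightarrow> real" where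
  "eq_quot_const u v x0 = -u*v*(v+1) + 2*u*v^2*x0 - u*v^2*x0^2"

definition eq_quot :: "real \<Rightarrow> real \<Rightarrow> real \<Rightarrow> real \<Rightarrow> real" where
  "eq_quot u v x0 x = -u*v^2 * x^2 + eq_quot_lin u v x0 * x + eq_quot_const u v x0"

lemma eq_cubic_divide: "eq_cubic u v x = (x - x0) * eq_quot u v x0 x + eq_cubic u v x0"
  unfolding eq_cubic_def eq_quot_def eq_quot_lin_def eq_quot_const_def by algebra

lemma eq_quot_diag: "eq_quot u v x0 x0 = eq_cubic_deriv u v x0"
  unfolding eq_cubic_deriv_def eq_quot_def eq_quot_lin_def eq_quot_const_def by algebra

lemma eq_quot_discrim:
  assumes "eq_cubic u v x0 = 0"
  shows "u^2*v^4 * R1_poly u v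
         = discrim (-u*v^2) (eq_quot_lin u v x0) (eq_quot_const u v x0) * (eq_cubic_deriv u v x0)^2"
  using assms
  unfolding eq_cubic_def eq_cubic_deriv_def R1_poly_def discrim_def eq_quot_lin_def eq_quot_const_def
  by algebra

lemma eq_cubic_other_root:
  assumes "eq_cubic u v x0 = 0" and "eq_cubic u v x = 0" and "x \<noteq> x0"
  shows "eq_quot u v x0 x = 0"
  using eq_cubic_divide[of u v x x0] assms by simp

lemma quadratic_nonpos_if_discrim_nonpos:
  fixes a b c x :: real
  assumes "a < 0" and "discrim a b c \<le> 0"
  shows "a * x^2 + b * x + c \<le> 0"
proof -
  have "4*a * (a * x^2 + b * x + c) = (2*a*x + b)^2 - discrim a b c"
    unfolding discrim_def by algebra
  also have "\<dots> \<ge> 0"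
    using assms(2) zero_le_power2[of "2*a*x + b"] by linarith
  finally show ?thesis
    using assms(1) by (simp add: zero_le_mult_iff)
qed

lemma eq_cubic_unique_root:
  assumes "u > 0" and "v > 0" and "R1_poly u v < 0" and "eq_cubic u v x0 = 0"
  shows "discrim (-u*v^2) (eq_quot_lin u v x0) (eq_quot_const u v x0) < 0"
    and "eq_cubic_deriv u v x0 < 0"
    and "eq_cubic u v x = 0 \<Longrightarrow> x = x0"
proof -
  let ?D = "discrim (-u*v^2) (eq_quot_lin u v x0) (eq_quot_const u v x0)"
  have "?D * (eq_cubic_deriv u v x0)^2 < 0"
    using eq_quot_discrim[OF assms(4)] assms(1-3) by (metis mult_pos_neg zero_less_mult_iff zero_less_power)
  then show D: "?D < 0"
    by (simp add: mult_less_0_iff)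
  have nonzero: "eq_cubic_deriv u v x0 \<noteq> 0"
    using \<open>?D * (eq_cubic_deriv u v x0)^2 < 0\<close> by auto
  have "eq_cubic_deriv u v x0 \<le> 0"
    using quadratic_nonpos_if_discrim_nonpos[of "-u*v^2", OF _ less_imp_le[OF D]] assms(1,2)
    by (simp add: eq_quot_diag[symmetric] eq_quot_def)
  with nonzero show "eq_cubic_deriv u v x0 < 0"
    by simp
  show "x = x0" if "eq_cubic u v x = 0"
    using discriminant_negative[OF _ D] eq_cubic_other_root[OF assms(4) that] assms(1,2)
    by (fastforce simp: eq_quot_def)
qed

lemma ex_sorted_triple:
  fixes x y z :: real
  assumes "P x" "P y" "P z" "x \<noteq> y" "x \<noteq> z" "y \<noteq> z"
  shows "\<exists>a b c. a < b \<and> b < c \<and> P a \<and> P b \<and> P c"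
proof -
  have "(x<y \<and> y<z) \<or> (x<z \<and> z<y) \<or> (y<x \<and> x<z) \<or> (y<z \<and> z<x) \<or> (z<x \<and> x<y) \<or> (z<y \<and> y<x)"
    using assms(4-6) by linarith
  then show ?thesis
    using assms(1-3) by blast
qed

lemma eq_cubic_three_roots:
  assumes "u > 0" and "v > 0" and "u*v \<ge> 1" and "R1_poly u v > 0"
  obtains a b c where "a < b" "b < c"
    and "eq_cubic u v a = 0" "eq_cubic u v b = 0" "eq_cubic u v c = 0"
proof -
  obtain x0 where root: "eq_cubic u v x0 = 0"
    using eq_cubic_has_root[OF assms(3)] by blast
  let ?D = "discrim (-u*v^2) (eq_quot_lin u v x0) (eq_quot_const u v x0)"
  have "?D * (eq_cubic_deriv u v x0)^2 > 0"
    using eq_quot_discrim[OF root] assms(1,2,4) by (metis mult_pos_pos zero_less_power)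
  then have "?D > 0" and "eq_quot u v x0 x0 \<noteq> 0"
    by (auto simp: zero_less_mult_iff eq_quot_diag)
  moreover have "-u*v^2 \<noteq> 0"
    using assms(1,2) by simp
  ultimately obtain z1 z2 where "z1 \<noteq> z2" "eq_quot u v x0 z1 = 0" "eq_quot u v x0 z2 = 0"
    unfolding eq_quot_def using discriminant_pos_ex by blast
  moreover from this have "eq_cubic u v z1 = 0" "eq_cubic u v z2 = 0" "z1 \<noteq> x0" "z2 \<noteq> x0"
    using eq_cubic_divide[of u v _ x0] root \<open>eq_quot u v x0 x0 \<noteq> 0\<close> by auto
  ultimately show ?thesis
    using ex_sorted_triple[of "\<lambda>x. eq_cubic u v x = 0" x0 z1 z2] root that by metis
qed

lemma eq_cubic_three_roots_factor:
  assumes "u > 0" and "v > 0" and "a < b" and "b < c"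
    and roots: "eq_cubic u v a = 0" "eq_cubic u v b = 0" "eq_cubic u v c = 0"
  shows "eq_cubic u v x = -u*v^2 * (x-a) * (x-b) * (x-c)"
    and "eq_cubic_deriv u v x = -u*v^2 * ((x-b)*(x-c) + (x-a)*(x-c) + (x-a)*(x-b))"
    and "S3_poly u v = jury_margin u v a * jury_margin u v b * jury_margin u v c"
proof -
  have quot: "eq_quot u v a b = 0"
    using eq_cubic_other_root[OF roots(1,2)] \<open>a < b\<close> by simp
  have factor: "eq_cubic u v x = -u*v^2 * (x-a) * (x-b) * (x-(2-a-b))" for x
    using roots(1) quot unfolding eq_cubic_def eq_quot_def eq_quot_lin_def eq_quot_const_def
    by algebra
  have "-u*v^2 * (c-a) * (c-b) * (c-(2-a-b)) = 0"
    using factor[of c] roots(3) by simp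
  then have c: "c = 2-a-b"
    using assms(1-4) by simp
  show "eq_cubic u v x = -u*v^2 * (x-a) * (x-b) * (x-c)"
    using factor c by simp
  show "eq_cubic_deriv u v x = -u*v^2 * ((x-b)*(x-c) + (x-a)*(x-c) + (x-a)*(x-b))"
    using roots(1) quot c
    unfolding eq_cubic_def eq_cubic_deriv_def eq_quot_def eq_quot_lin_def eq_quot_const_def
    by algebra
  show "S3_poly u v = jury_margin u v a * jury_margin u v b * jury_margin u v c"
    using roots(1) quot c
    unfolding eq_cubic_def eq_quot_def eq_quot_lin_def eq_quot_const_def S3_poly_def
      jury_margin_def eq_cubic_deriv_def
    by algebra
qed

lemma eq_cubic_root_cases:
  assumes "u > 0" and "v > 0" and "a < b" and "b < c"
    and "eq_cubic u v a = 0" "eq_cubic u v b = 0" "eq_cubic u v c = 0"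
    and "eq_cubic u v x = 0"
  shows "x = a \<or> x = b \<or> x = c"
  using eq_cubic_three_roots_factor(1)[OF assms(1-7), of x] assms(1,2,8) by simp

lemma eq_cubic_deriv_signs_at_three_roots:
  assumes "u > 0" and "v > 0" and "a < b" and "b < c"
    and "eq_cubic u v a = 0" "eq_cubic u v b = 0" "eq_cubic u v c = 0"
  shows "eq_cubic_deriv u v a < 0" and "eq_cubic_deriv u v b > 0" and "eq_cubic_deriv u v c < 0"
proof -
  have "u*v^2 > 0"
    using assms(1,2) by simp
  then show "eq_cubic_deriv u v a < 0" and "eq_cubic_deriv u v b > 0" and "eq_cubic_deriv u v c < 0"
    using eq_cubic_three_roots_factor(2)[OF assms] \<open>a < b\<close> \<open>b < c\<close>
    by (auto intro!: mult_pos_pos mult_pos_neg simp: mult_neg_neg)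
qed

section \<open>A unique stable equilibrium\<close>

(* jury_margin u v x = margin_rem_lin u v x0 * x + margin_rem_const u v x0 modulo eq_quot u v x0 x,
   so margin_resultant u v x0 is -u v^2 times the product of jury_margin over the two roots of
   eq_quot u v x0, i.e. over the roots of eq_cubic other than x0. *)
definition margin_rem_lin :: "real \<Rightarrow> real \<Rightarrow> real \<Rightarrow> real" where
  "margin_rem_lin u v x0 = 2*u*v*(v*x0 - v + 1)"

definition margin_rem_const :: "real \<Rightarrow> real \<Rightarrow> real \<Rightarrow> real" where
  "margin_rem_const u v x0 =
     -3*u*v^2*x0^3 + 8*u*v^2*x0^2 - 7*u*v^2*x0 + 2*u*v^2 - 3*u*v*x0 + 2*u*v + 2"

definition margin_resultant :: "real \<Rightarrow> real \<Rightarrow> real \<Rightarrow> real" where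
  "margin_resultant u v x0 =
     -u*v^2 * (margin_rem_const u v x0)^2
     - eq_quot_lin u v x0 * margin_rem_lin u v x0 * margin_rem_const u v x0
     + eq_quot_const u v x0 * (margin_rem_lin u v x0)^2"

lemma S3_poly_factor_resultant:
  assumes "eq_cubic u v x0 = 0"
  shows "-u*v^2 * S3_poly u v = jury_margin u v x0 * margin_resultant u v x0"
  using assms
  unfolding eq_cubic_def S3_poly_def jury_margin_def eq_cubic_deriv_def margin_resultant_def
    margin_rem_lin_def margin_rem_const_def eq_quot_lin_def eq_quot_const_def
  by algebra

lemma quadratic_resultant_nonneg:
  fixes a b c \<alpha> \<beta> :: real
  assumes "discrim a b c \<le> 0"
  shows "0 \<le> a * (a*\<beta>^2 - b*\<alpha>*\<beta> + c*\<alpha>^2)"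
proof -
  have "4 * (a * (a*\<beta>^2 - b*\<alpha>*\<beta> + c*\<alpha>^2)) = (2*a*\<beta> - b*\<alpha>)^2 + (- discrim a b c) * \<alpha>^2"
    unfolding discrim_def by algebra
  also have "\<dots> \<ge> 0"
    using assms by (intro add_nonneg_nonneg mult_nonneg_nonneg) auto
  finally show ?thesis
    by simp
qed

lemma jury_margin_pos_if_discrim_nonpos:
  assumes "u > 0" and "v > 0" and "eq_cubic u v x0 = 0" and "S3_poly u v > 0"
    and "discrim (-u*v^2) (eq_quot_lin u v x0) (eq_quot_const u v x0) \<le> 0"
  shows "jury_margin u v x0 > 0"
proof -
  have "0 \<le> -u*v^2 * margin_resultant u v x0"
    using quadratic_resultant_nonneg[OF assms(5)] unfolding margin_resultant_def .
  then have "margin_resultant u v x0 \<le> 0"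
    using assms(1,2) by (simp add: mult_le_0_iff)
  moreover have "jury_margin u v x0 * margin_resultant u v x0 < 0"
  proof -
    have "u*v^2 * S3_poly u v > 0"
      using assms(1,2,4) by simp
    then show ?thesis
      using S3_poly_factor_resultant[OF assms(3)] by linarith
  qed
  ultimately show ?thesis
    by (auto simp: mult_less_0_iff)
qed

lemma ex1_stable_root_if_R1_neg:
  assumes "u > 0" and "v > 0" and "u*v > 1" and "R1_poly u v < 0" and "S3_poly u v > 0"
  shows "\<exists>!x. stable_root u v x"
proof -
  obtain x0 where root: "eq_cubic u v x0 = 0"
    using eq_cubic_has_root[OF less_imp_le[OF assms(3)]] by blast
  note unique = eq_cubic_unique_root[OF assms(1,2,4) root]
  have "stable_root u v x0"
    unfolding stable_root_def
    using eq_cubic_root_in_unit_interval[OF assms(1-3) root] root unique(2)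
      jury_margin_pos_if_discrim_nonpos[OF assms(1,2) root assms(5) less_imp_le[OF unique(1)]]
    by blast
  then show ?thesis
    using unique(3) unfolding stable_root_def by blast
qed

lemma ex1_stable_root_if_S3_neg:
  assumes "u > 0" and "v > 0" and "u*v > 1" and "R1_poly u v > 0" and "S3_poly u v < 0"
  shows "\<exists>!x. stable_root u v x"
proof -
  obtain a b c where order: "a < b" "b < c"
    and roots: "eq_cubic u v a = 0" "eq_cubic u v b = 0" "eq_cubic u v c = 0"
    using eq_cubic_three_roots[OF assms(1,2) less_imp_le[OF assms(3)] assms(4)] by blast
  note deriv = eq_cubic_deriv_signs_at_three_roots[OF assms(1,2) order roots]
  note in_unit = eq_cubic_root_in_unit_interval[OF assms(1-3)]
  have "b * eq_cubic_deriv u v b > 0"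
    using in_unit[OF roots(2)] deriv(2) by simp
  then have "jury_margin u v b > 0"
    unfolding jury_margin_def by simp
  moreover have "jury_margin u v a * jury_margin u v c * jury_margin u v b < 0"
    using eq_cubic_three_roots_factor(3)[OF assms(1,2) order roots] assms(5) by (simp add: mult_ac)
  ultimately have "jury_margin u v a * jury_margin u v c < 0"
    by (simp add: mult_less_0_iff)
  moreover have "stable_root u v a \<longleftrightarrow> jury_margin u v a > 0"
    using in_unit[OF roots(1)] roots(1) deriv(1) unfolding stable_root_def by simp
  moreover have "stable_root u v c \<longleftrightarrow> jury_margin u v c > 0"
    using in_unit[OF roots(3)] roots(3) deriv(3) unfolding stable_root_def by simp
  ultimately have "stable_root u v a \<longleftrightarrow> \<not> stable_root u v c"
    by (auto simp: mult_less_0_iff)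
  moreover have "\<not> stable_root u v b"
    using deriv(2) unfolding stable_root_def by simp
  moreover have "stable_root u v x \<Longrightarrow> x = a \<or> x = b \<or> x = c" for x
    using eq_cubic_root_cases[OF assms(1,2) order roots] unfolding stable_root_def by blast
  ultimately show ?thesis
    by metis
qed

section \<open>Two stable equilibria\<close>

definition A2_poly :: "real \<Rightarrow> real \<Rightarrow> real" where
  "A2_poly u v = u^2*v^2 - 4*u^2*v - 5*u*v^2 + 21*u*v + 11*v - 60"

definition T_poly :: "real \<Rightarrow> real \<Rightarrow> real" where
  "T_poly u v = u^2*v^2 - 4*u^2*v - 4*u*v^2 + 22*u*v - 75"

lemma jury_margin_cubic:
  assumes "eq_cubic u v x = 0"
  shows "(jury_margin u v x)^3 + (u*v - 15) * (jury_margin u v x)^2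
         - T_poly u v * jury_margin u v x - S3_poly u v = 0"
  using assms unfolding eq_cubic_def jury_margin_def eq_cubic_deriv_def T_poly_def S3_poly_def
  by algebra

lemma cubic_root_pos_if_signs:
  fixes h \<alpha> \<beta> \<gamma> :: real
  assumes "h^3 + \<alpha>*h^2 - \<beta>*h - \<gamma> = 0" and "\<alpha> \<le> 0" and "\<beta> \<le> 0" and "\<gamma> > 0"
  shows "h > 0"
proof (rule ccontr)
  assume "\<not> h > 0"
  then have "h^3 \<le> 0" and "\<alpha>*h^2 \<le> 0" and "\<beta>*h \<ge> 0"
    using assms(2,3) by (simp_all add: mult_nonpos_nonneg mult_nonpos_nonpos power_le_zero_eq)
  then show False
    using assms(1,4) by linarith
qed

lemma concave_quadratic_nonpos:
  fixes a b c w x :: real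
  assumes "a \<le> 0" and "a*w^2 + b*w + c \<le> 0" and "(2*a*w + b) * (x - w) \<le> 0"
  shows "a*x^2 + b*x + c \<le> 0"
proof -
  have "a*x^2 + b*x + c = (a*w^2 + b*w + c) + (2*a*w + b) * (x - w) + a * (x - w)^2"
    by algebra
  moreover have "a * (x - w)^2 \<le> 0"
    using assms(1) by (simp add: mult_nonpos_nonneg)
  ultimately show ?thesis
    using assms(2,3) by linarith
qed

lemma sqrt_uv_bound_if_T_poly_nonneg:
  assumes "u > 0" and "v > 0" and "t^2 = u*v" and "T_poly u v \<ge> 0"
  shows "t^2 - 2*t - 5 \<ge> 0"
proof -
  have "(u+v)^2 - (2*t)^2 = (u-v)^2"
    using assms(3) by algebra
  then have "(2*t)^2 \<le> (u+v)^2"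
    using zero_le_power2[of "u-v"] by linarith
  then have "2*t \<le> u+v"
    by (rule power2_le_imp_le) (use assms(1,2) in simp)
  then have "4*(u*v) * (2*t) \<le> 4*(u*v) * (u+v)"
    using assms(1,2) by (intro mult_left_mono) auto
  moreover have "T_poly u v = (u*v)^2 + 22*(u*v) - 75 - 4*(u*v) * (u+v)"
    unfolding T_poly_def by algebra
  ultimately have "0 \<le> (u*v)^2 + 22*(u*v) - 75 - 4*(u*v) * (2*t)"
    using assms(4) by linarith
  also have "\<dots> = (t^2 - 2*t - 5) * ((t - 3)^2 + 6)"
    using assms(3) by algebra
  finally show ?thesis
    using zero_le_power2[of "t - 3"] by (auto simp: zero_le_mult_iff)
qed

lemma uv_lt_12_if_A2_poly_pos:
  assumes "v > 0" and "u*v < 15" and "A2_poly u v > 0"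
  shows "u*v < 12"
proof (rule ccontr)
  define p where "p = u*v"
  assume "\<not> u*v < 12"
  then have "12 \<le> p" and "p < 15"
    using assms(2) by (simp_all add: p_def)
  have "discrim (11 - 5*p) (p^2 + 21*p - 60) (-4*p^2) = (p-12) * (p-15) * (p^2 - 11*p + 20)"
    unfolding discrim_def by algebra
  also have "\<dots> \<le> 0"
    using \<open>12 \<le> p\<close> \<open>p < 15\<close>
    by (intro mult_nonpos_nonneg mult_nonneg_nonpos) (auto simp: power2_eq_square)
  finally have "(11 - 5*p) * v^2 + (p^2 + 21*p - 60) * v + (-4*p^2) \<le> 0"
    using \<open>12 \<le> p\<close> by (intro quadratic_nonpos_if_discrim_nonpos) auto
  moreover have "v * A2_poly u v = (11 - 5*p) * v^2 + (p^2 + 21*p - 60) * v + (-4*p^2)"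
    unfolding p_def A2_poly_def by algebra
  moreover have "v * A2_poly u v > 0"
    using assms(1,3) by simp
  ultimately show False
    by linarith
qed

lemma near_sqrt12_poly_signs:
  fixes t :: real
  assumes "3449/1000 \<le> t" and "t \<le> 34642/10000"
  shows "-2/5*t^4 + 17/5*t^3 - 244/25*t^2 + 168/25*t + 49/5 < 0"
    and "3*t^4 - 14*t^3 + 33/5*t^2 + 154/5*t - 38 < 0"
    and "-9/25*t^4 + 11/5*t^3 - 128/25*t^2 + 3*t + 5 < 0"
    and "13/5*t^4 - 6*t^3 + 16/5*t^2 + 10*t - 25 > 0"
proof -
  define d where "d = t - 3449/1000"
  have t: "t = 3449/1000 + d"
    by (simp add: d_def)
  have "0 \<le> d" and "d \<le> 19/1250"
    using assms by (simp_all add: d_def)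
  then have "d^2 \<le> (19/1250)^2" "d^3 \<le> (19/1250)^3" "d^4 \<le> (19/1250)^4"
    by (simp_all only: power_mono)
  then have d_upper: "d^2 \<le> 361/1562500" "d^3 \<le> 6859/1953125000" "d^4 \<le> 130321/2441406250000"
    by (simp_all add: power_divide)
  have d_nonneg: "0 \<le> d" "0 \<le> d^2" "0 \<le> d^3" "0 \<le> d^4"
    using \<open>0 \<le> d\<close> by simp_all
  have "-2/5*t^4 + 17/5*t^3 - 244/25*t^2 + 168/25*t + 49/5
        = -577400834701/2500000000000 - 1535635737/312500000*d - 3912053/1250000*d^2
          - 1324/625*d^3 - 2/5*d^4"
    unfolding t by algebra
  then show "-2/5*t^4 + 17/5*t^3 - 244/25*t^2 + 168/25*t + 49/5 < 0"
    using d_nonneg by linarith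
  have "3*t^4 - 14*t^3 + 33/5*t^2 + 154/5*t - 38
        = -3134853832397/1000000000000 + 17261673047/250000000*d + 37931409/500000*d^2
          + 6847/250*d^3 + 3*d^4"
    unfolding t by algebra
  then show "3*t^4 - 14*t^3 + 33/5*t^2 + 154/5*t - 38 < 0"
    using d_upper \<open>d \<le> 19/1250\<close> by linarith
  have "-9/25*t^4 + 11/5*t^3 - 128/25*t^2 + 3*t + 5
        = -155973804665809/25000000000000 - 80543809391/6250000000*d - 100638727/12500000*d^2
          - 17291/6250*d^3 - 9/25*d^4"
    unfolding t by algebra
  then show "-9/25*t^4 + 11/5*t^3 - 128/25*t^2 + 3*t + 5 < 0"
    using d_nonneg by linarith
  have "13/5*t^4 - 6*t^3 + 16/5*t^2 + 10*t - 25
        = 846510981495613/5000000000000 + 305804039537/1250000000*d + 316723439/2500000*d^2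
          + 37337/1250*d^3 + 13/5*d^4"
    unfolding t by algebra
  then show "13/5*t^4 - 6*t^3 + 16/5*t^2 + 10*t - 25 > 0"
    using d_nonneg by linarith
qed

text \<open>Near \<open>u = v = sqrt 12\<close> both \<open>A2\<close> and \<open>S3\<close> are within \<open>0.02\<close> of zero, hence the
  narrow window for \<open>t = sqrt (u v)\<close>. For fixed \<open>u v = t\<^sup>2\<close>, \<open>v A2\<close> and \<open>v S3\<close> are concave
  quadratics in \<open>v\<close>, and \<open>w = t - (t\<^sup>2 - 2 t - 5)/5\<close> separates the values of \<open>v\<close> allowed
  by \<open>A2 > 0\<close> (below \<open>w\<close>) from those allowed by \<open>S3 > 0\<close> (above \<open>w\<close>).\<close>

lemma v_below_if_A2_poly_pos_near_sqrt12:
  assumes "v > 0" and uv: "t^2 = u*v" and "3449/1000 \<le> t" and "t \<le> 34642/10000"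
    and e_nonneg: "t^2 - 2*t - 5 \<ge> 0" and "A2_poly u v > 0"
  shows "v < t - (t^2 - 2*t - 5)/5"
proof (rule ccontr)
  define p where "p = t^2"
  define e where "e = t^2 - 2*t - 5"
  define w where "w = t - e/5"
  assume "\<not> v < t - (t^2 - 2*t - 5)/5"
  then have "w \<le> v"
    by (simp add: w_def e_def)
  note signs = near_sqrt12_poly_signs[OF assms(3,4)]
  have "(3449/1000)^2 \<le> t^2"
    using assms(3) by (rule power_mono) simp
  then have "3 \<le> p"
    unfolding p_def by (simp add: power_divide)
  have "(11 - 5*p) * w^2 + (p^2 + 21*p - 60) * w + (-4*p^2)
        = e * (-2/5*t^4 + 17/5*t^3 - 244/25*t^2 + 168/25*t + 49/5)"
    unfolding p_def e_def w_def by algebra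
  also have "\<dots> \<le> 0"
    using e_nonneg signs(1) unfolding e_def by (simp add: mult_nonneg_nonpos)
  finally have at_w: "(11 - 5*p) * w^2 + (p^2 + 21*p - 60) * w + (-4*p^2) \<le> 0" .
  have "2 * (11 - 5*p) * w + (p^2 + 21*p - 60) = 3*t^4 - 14*t^3 + 33/5*t^2 + 154/5*t - 38"
    unfolding p_def e_def w_def by algebra
  then have slope: "(2 * (11 - 5*p) * w + (p^2 + 21*p - 60)) * (v - w) \<le> 0"
    using signs(2) \<open>w \<le> v\<close> by (simp add: mult_nonpos_nonneg)
  have "v * A2_poly u v = (11 - 5*p) * v^2 + (p^2 + 21*p - 60) * v + (-4*p^2)"
    using uv unfolding p_def A2_poly_def by algebra
  also have "\<dots> \<le> 0"
    using concave_quadratic_nonpos[OF _ at_w slope] \<open>3 \<le> p\<close> by simp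
  finally show False
    using assms(1,6) by (simp add: mult_le_0_iff)
qed

lemma S3_poly_nonpos_if_v_below_near_sqrt12:
  assumes "v > 0" and uv: "t^2 = u*v" and "3449/1000 \<le> t" and "t \<le> 34642/10000"
    and e_nonneg: "t^2 - 2*t - 5 \<ge> 0" and "v < t - (t^2 - 2*t - 5)/5"
  shows "S3_poly u v \<le> 0"
proof -
  define p where "p = t^2"
  define e where "e = t^2 - 2*t - 5"
  define w where "w = t - e/5"
  have "v < w"
    using assms(6) by (simp add: w_def e_def)
  note signs = near_sqrt12_poly_signs[OF assms(3,4)]
  have "(3449/1000)^2 \<le> t^2"
    using assms(3) by (rule power_mono) simp
  then have "3 \<le> p"
    unfolding p_def by (simp add: power_divide)
  then have lead: "-(4*p^2 - 12*p) \<le> 0"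
    by (simp add: power2_eq_square)
  have "-(4*p^2 - 12*p) * w^2 + (p^3 + 15*p^2 - 85*p + 125) * w + (-(4*p^2 - 12*p) * p)
        = e^2 * (-9/25*t^4 + 11/5*t^3 - 128/25*t^2 + 3*t + 5)"
    unfolding p_def e_def w_def by algebra
  also have "\<dots> \<le> 0"
    using signs(3) by (simp add: mult_nonneg_nonpos)
  finally have at_w:
    "-(4*p^2 - 12*p) * w^2 + (p^3 + 15*p^2 - 85*p + 125) * w + (-(4*p^2 - 12*p) * p) \<le> 0" .
  have "2 * (-(4*p^2 - 12*p)) * w + (p^3 + 15*p^2 - 85*p + 125)
        = e * (13/5*t^4 - 6*t^3 + 16/5*t^2 + 10*t - 25)"
    unfolding p_def e_def w_def by algebra
  then have slope: "(2 * (-(4*p^2 - 12*p)) * w + (p^3 + 15*p^2 - 85*p + 125)) * (v - w) \<le> 0"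
    using signs(4) e_nonneg \<open>v < w\<close> unfolding e_def by (simp add: mult_nonneg_nonpos)
  have "v * S3_poly u v
        = -(4*p^2 - 12*p) * v^2 + (p^3 + 15*p^2 - 85*p + 125) * v + (-(4*p^2 - 12*p) * p)"
    using uv unfolding p_def S3_poly_def by algebra
  also have "\<dots> \<le> 0"
    using concave_quadratic_nonpos[OF lead at_w slope] .
  finally show ?thesis
    using assms(1) by (simp add: mult_le_0_iff)
qed

lemma T_poly_neg:
  assumes "u > 0" and "v > 0" and "u*v < 15" and "A2_poly u v > 0" and "S3_poly u v > 0"
  shows "T_poly u v < 0"
proof (rule ccontr)
  assume "\<not> T_poly u v < 0"
  define t where "t = sqrt (u*v)"
  have "t \<ge> 0" and uv: "t^2 = u*v"
    using assms(1,2) by (simp_all add: t_def)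
  have e_nonneg: "t^2 - 2*t - 5 \<ge> 0"
    using sqrt_uv_bound_if_T_poly_nonneg[OF assms(1,2) uv] \<open>\<not> T_poly u v < 0\<close> by simp
  have "t^2 - 2*t - 5 = (t - 3449/1000) * (t + 1449/1000) - 2399/1000000"
    by algebra
  then have "0 < (t - 3449/1000) * (t + 1449/1000)"
    using e_nonneg by linarith
  then have "3449/1000 \<le> t"
    using \<open>t \<ge> 0\<close> by (simp add: zero_less_mult_iff)
  moreover have "t \<le> 34642/10000"
  proof (rule power2_le_imp_le)
    show "t^2 \<le> (34642/10000)^2"
      using uv_lt_12_if_A2_poly_pos[OF assms(2-4)] uv by (simp add: power_divide)
  qed simp
  ultimately have "S3_poly u v \<le> 0"
    using S3_poly_nonpos_if_v_below_near_sqrt12[OF assms(2) uv _ _ e_nonneg]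
      v_below_if_A2_poly_pos_near_sqrt12[OF assms(2) uv _ _ e_nonneg assms(4)] by blast
  then show False
    using assms(5) by simp
qed

lemma two_stable_roots:
  assumes "u > 0" and "v > 0" and "R1_poly u v > 0" and "S3_poly u v > 0"
    and "u*v < 15" and "A2_poly u v > 0"
  shows "\<exists>a c. a \<noteq> c \<and> stable_root u v a \<and> stable_root u v c"
proof -
  have "u*v > 1"
    using one_lt_uv_if_R1_poly_pos[OF assms(1-3)] .
  obtain a b c where order: "a < b" "b < c"
    and roots: "eq_cubic u v a = 0" "eq_cubic u v b = 0" "eq_cubic u v c = 0"
    using eq_cubic_three_roots[OF assms(1,2) less_imp_le[OF \<open>u*v > 1\<close>] assms(3)] by blast
  note deriv = eq_cubic_deriv_signs_at_three_roots[OF assms(1,2) order roots]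
  have "T_poly u v < 0"
    using T_poly_neg[OF assms(1,2,5,6,4)] .
  then have "stable_root u v x" if "eq_cubic u v x = 0" and "eq_cubic_deriv u v x < 0" for x
    using cubic_root_pos_if_signs[OF jury_margin_cubic[OF that(1)]] assms(4,5) that
      eq_cubic_root_in_unit_interval[OF assms(1,2) \<open>u*v > 1\<close> that(1)]
    unfolding stable_root_def by simp
  then have "stable_root u v a" and "stable_root u v c"
    using deriv(1,3) roots by blast+
  moreover have "a \<noteq> c"
    using order by simp
  ultimately show ?thesis
    by blast
qed

theorem theorem2:
  fixes u v :: real
  assumes "u > 0" and "v > 0"
  defines "R1 \<equiv> u^2*v^2 - 4*u^2*v - 4*u*v^2 + 18*u*v - 27"
      and "S3 \<equiv> u^3*v^3 - 4*u^3*v^2 - 4*u^2*v^3 + 15*u^2*v^2 + 12*u^2*v + 12*u*v^2 - 85*u*v + 125"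
      and "A1 \<equiv> u*v - 15"
      and "A2 \<equiv> u^2*v^2 - 4*u^2*v - 5*u*v^2 + 21*u*v + 11*v - 60"
  shows "(R1 > 0 \<and> S3 > 0 \<and> A1 < 0 \<and> A2 > 0 \<longrightarrow>
            (\<exists>p q. p \<noteq> q \<and> stable_pos_eq 1 1 u v p \<and> stable_pos_eq 1 1 u v q))
       \<and> ((u*v > 1 \<and> R1 < 0 \<and> S3 > 0) \<or> (u*v > 1 \<and> R1 > 0 \<and> S3 < 0) \<longrightarrow>
            (\<exists>!p. stable_pos_eq 1 1 u v p))"
proof -
  have polys: "R1 = R1_poly u v" "S3 = S3_poly u v" "A2 = A2_poly u v"
    unfolding R1_def S3_def A2_def R1_poly_def S3_poly_def A2_poly_def by simp_all
  show ?thesis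
  proof (intro conjI impI)
    assume "R1 > 0 \<and> S3 > 0 \<and> A1 < 0 \<and> A2 > 0"
    then obtain a c where "stable_root u v a" "stable_root u v c" "a \<noteq> c"
      using two_stable_roots[OF assms(1,2)] unfolding polys A1_def by auto
    then show "\<exists>p q. p \<noteq> q \<and> stable_pos_eq 1 1 u v p \<and> stable_pos_eq 1 1 u v q"
      by (rule two_stable_pos_eq_if_two_stable_roots[OF assms(2)])
  next
    assume "(u*v > 1 \<and> R1 < 0 \<and> S3 > 0) \<or> (u*v > 1 \<and> R1 > 0 \<and> S3 < 0)"
    then have "\<exists>!x. stable_root u v x"
      using ex1_stable_root_if_R1_neg[OF assms(1,2)] ex1_stable_root_if_S3_neg[OF assms(1,2)]
      unfolding polys by blast
    then show "\<exists>!p. stable_pos_eq 1 1 u v p"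
      by (rule ex1_stable_pos_eq_if_ex1_stable_root[OF assms(2)])
  qed
qed

end
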